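(* Let $P\in\Delta$ with $\mathcal Y=\mathcal Z$, and suppose that the marginal distributions of the pairs $(X,Y)$ and $(X,Z)$ are identical, i.e. $P(X=x,Y=w)=P(X=x,Z=w)$ for all $x\in\mathcal X$, $w\in\mathcal Y$. Then $\widetilde{UI}(X:Y\setminus Z)=\widetilde{UI}(X:Z\setminus Y)=0$, $\widetilde{SI}(X:Y;Z)=MI(X:Y)=MI(X:Z)$, and $\widetilde{CI}(X:Y;Z)=MI(X:Y|Z)=MI(X:Z|Y)$.
   Context: $X,Y,Z$ are random variables with finite state spaces $\mathcal X,\mathcal Y,\mathcal Z$. $\Delta$ denotes the set of all probability distributions on $\mathcal X\times\mathcal Y\times\mathcal Z$; $P\in\Delta$ is the joint distribution (unsubscripted quantities refer to $P$), a subscript $Q$ means computed w.r.t. $Q\in\Delta$. $\Delta_P=\{Q\in\Delta: Q(X=x,Y=y)=P(X=x,Y=y)\text{ and }Q(X=x,Z=z)=P(X=x,Z=z)\ \forall x,y,z\}$. $CoI_Q(X;Y;Z)=MI_Q(X:Y)-MI_Q(X:Y|Z)$. Define $\widetilde{UI}(X:Y\setminus Z)=\min_{Q\in\Delta_P}MI_Q(X:Y|Z)$, $\widetilde{UI}(X:Z\setminus Y)=\min_{Q\in\Delta_P}MI_Q(X:Z|Y)$, $\widetilde{SI}(X:Y;Z)=\max_{Q\in\Delta_P}CoI_Q(X;Y;Z)$, $\widetilde{CI}(X:Y;Z)=MI(X:(Y,Z))-\min_{Q\in\Delta_P}MI_Q(X:(Y,Z))$. *)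

theory Defs
  imports "HOL-Analysis.Analysis"
begin

text \<open>A joint distribution of (X,Y,Z) on finite state spaces (the finite types 'x, 'y, 'z)
  is given by its probability mass function Q x y z = Q(X=x, Y=y, Z=z).\<close>

definition distr :: "('x::finite \<Rightarrow> 'y::finite \<Rightarrow> 'z::finite \<Rightarrow> real) \<Rightarrow> bool" where
  "distr Q \<longleftrightarrow> (\<forall>x y z. 0 \<le> Q x y z) \<and> (\<Sum>x\<in>UNIV. \<Sum>y\<in>UNIV. \<Sum>z\<in>UNIV. Q x y z) = 1"

definition pXY :: "('x::finite \<Rightarrow> 'y::finite \<Rightarrow> 'z::finite \<Rightarrow> real) \<Rightarrow> 'x \<Rightarrow> 'y \<Rightarrow> real" where
  "pXY Q x y = (\<Sum>z\<in>UNIV. Q x y z)"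
definition pXZ :: "('x::finite \<Rightarrow> 'y::finite \<Rightarrow> 'z::finite \<Rightarrow> real) \<Rightarrow> 'x \<Rightarrow> 'z \<Rightarrow> real" where
  "pXZ Q x z = (\<Sum>y\<in>UNIV. Q x y z)"
definition pYZ :: "('x::finite \<Rightarrow> 'y::finite \<Rightarrow> 'z::finite \<Rightarrow> real) \<Rightarrow> 'y \<Rightarrow> 'z \<Rightarrow> real" where
  "pYZ Q y z = (\<Sum>x\<in>UNIV. Q x y z)"
definition pX :: "('x::finite \<Rightarrow> 'y::finite \<Rightarrow> 'z::finite \<Rightarrow> real) \<Rightarrow> 'x \<Rightarrow> real" where
  "pX Q x = (\<Sum>y\<in>UNIV. \<Sum>z\<in>UNIV. Q x y z)"
definition pY :: "('x::finite \<Rightarrow> 'y::finite \<Rightarrow> 'z::finite \<Rightarrow> real) \<Rightarrow> 'y \<Rightarrow> real" where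
  "pY Q y = (\<Sum>x\<in>UNIV. \<Sum>z\<in>UNIV. Q x y z)"
definition pZ :: "('x::finite \<Rightarrow> 'y::finite \<Rightarrow> 'z::finite \<Rightarrow> real) \<Rightarrow> 'z \<Rightarrow> real" where
  "pZ Q z = (\<Sum>x\<in>UNIV. \<Sum>y\<in>UNIV. Q x y z)"

definition plog :: "real \<Rightarrow> real \<Rightarrow> real" where
  "plog a b = (if a = 0 then 0 else a * log 2 (a / b))"

definition MI_XY :: "('x::finite \<Rightarrow> 'y::finite \<Rightarrow> 'z::finite \<Rightarrow> real) \<Rightarrow> real" where
  "MI_XY Q = (\<Sum>x\<in>UNIV. \<Sum>y\<in>UNIV. plog (pXY Q x y) (pX Q x * pY Q y))"
definition MI_XZ :: "('x::finite \<Rightarrow> 'y::finite \<Rightarrow> 'z::finite \<Rightarrow> real) \<Rightarrow> real" where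
  "MI_XZ Q = (\<Sum>x\<in>UNIV. \<Sum>z\<in>UNIV. plog (pXZ Q x z) (pX Q x * pZ Q z))"
definition CMI_XY_Z :: "('x::finite \<Rightarrow> 'y::finite \<Rightarrow> 'z::finite \<Rightarrow> real) \<Rightarrow> real" where
  "CMI_XY_Z Q = (\<Sum>x\<in>UNIV. \<Sum>y\<in>UNIV. \<Sum>z\<in>UNIV. plog (Q x y z) (pXZ Q x z * pYZ Q y z / pZ Q z))"
definition CMI_XZ_Y :: "('x::finite \<Rightarrow> 'y::finite \<Rightarrow> 'z::finite \<Rightarrow> real) \<Rightarrow> real" where
  "CMI_XZ_Y Q = (\<Sum>x\<in>UNIV. \<Sum>y\<in>UNIV. \<Sum>z\<in>UNIV. plog (Q x y z) (pXY Q x y * pYZ Q y z / pY Q y))"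
definition MI_X_YZ :: "('x::finite \<Rightarrow> 'y::finite \<Rightarrow> 'z::finite \<Rightarrow> real) \<Rightarrow> real" where
  "MI_X_YZ Q = (\<Sum>x\<in>UNIV. \<Sum>y\<in>UNIV. \<Sum>z\<in>UNIV. plog (Q x y z) (pX Q x * pYZ Q y z))"
definition CoI :: "('x::finite \<Rightarrow> 'y::finite \<Rightarrow> 'z::finite \<Rightarrow> real) \<Rightarrow> real" where
  "CoI Q = MI_XY Q - CMI_XY_Z Q"

definition DeltaP :: "('x::finite \<Rightarrow> 'y::finite \<Rightarrow> 'z::finite \<Rightarrow> real) \<Rightarrow> ('x \<Rightarrow> 'y \<Rightarrow> 'z \<Rightarrow> real) set" where
  "DeltaP P = {Q. distr Q \<and> pXY Q = pXY P \<and> pXZ Q = pXZ P}"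

text \<open>The min/max over the compact set Delta_P are attained; written as Inf/Sup.\<close>
definition UI_Y :: "('x::finite \<Rightarrow> 'y::finite \<Rightarrow> 'z::finite \<Rightarrow> real) \<Rightarrow> real" where
  "UI_Y P = (INF Q\<in>DeltaP P. CMI_XY_Z Q)"
definition UI_Z :: "('x::finite \<Rightarrow> 'y::finite \<Rightarrow> 'z::finite \<Rightarrow> real) \<Rightarrow> real" where
  "UI_Z P = (INF Q\<in>DeltaP P. CMI_XZ_Y Q)"
definition SI :: "('x::finite \<Rightarrow> 'y::finite \<Rightarrow> 'z::finite \<Rightarrow> real) \<Rightarrow> real" where
  "SI P = (SUP Q\<in>DeltaP P. CoI Q)"
definition CI :: "('x::finite \<Rightarrow> 'y::finite \<Rightarrow> 'z::finite \<Rightarrow> real) \<Rightarrow> real" where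
  "CI P = MI_X_YZ P - (INF Q\<in>DeltaP P. MI_X_YZ Q)"

end

theory Submission
  imports Defs
begin

text \<open>Every quantity in the theorem is an optimum over \<open>\<Delta>\<^sub>P\<close> of a function whose
  dependence on \<open>Q\<close> is controlled by the chain rules
  \<open>MI(X:(Y,Z)) = MI(X:Z) + MI(X:Y|Z) = MI(X:Y) + MI(X:Z|Y)\<close>,
  in which \<open>MI(X:Y)\<close> and \<open>MI(X:Z)\<close> are constant on \<open>\<Delta>\<^sub>P\<close>. Hence all optima are attained at
  any \<open>Q \<in> \<Delta>\<^sub>P\<close> with \<open>MI\<^sub>Q(X:Y|Z) = 0\<close>, and when the pairs \<open>(X,Y)\<close>, \<open>(X,Z)\<close> have the same
  law, the coupling in which \<open>Z = Y\<close> almost surely is such a \<open>Q\<close>.\<close>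

lemma plog_lower_bound:
  assumes "0 \<le> a" "0 \<le> b" "0 < a \<Longrightarrow> 0 < b"
  shows "(a - b) / ln 2 \<le> plog a b"
proof (cases "a = 0")
  case True
  then show ?thesis using assms by (simp add: plog_def divide_nonpos_pos)
next
  case False
  then have a: "0 < a" and b: "0 < b" using assms by auto
  have "a * ln (b / a) \<le> a * (b / a - 1)"
    using a b by (intro mult_left_mono ln_le_minus_one) auto
  also have "\<dots> = b - a" using a by (simp add: right_diff_distrib)
  finally have "a - b \<le> a * ln (a / b)" using a b by (simp add: ln_div algebra_simps)
  then show ?thesis using False by (simp add: plog_def log_def divide_right_mono)
qed

lemma plog_split:
  assumes "0 \<le> a" "0 < b" "0 < c" "d = b * c"
  shows "plog a b = a * log 2 c + plog a d"
proof (cases "a = 0")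
  case False
  then have "log 2 (a / b) = log 2 (c * (a / d))"
    using assms by (simp add: field_simps)
  also have "\<dots> = log 2 c + log 2 (a / d)"
    using False assms by (subst log_mult) auto
  finally show ?thesis using False by (simp add: plog_def distrib_left)
qed (simp add: plog_def)

lemma pX_eq_sum_pXY: "pX Q x = (\<Sum>y\<in>UNIV. pXY Q x y)"
  by (simp add: pX_def pXY_def)

lemma pY_eq_sum_pXY: "pY Q y = (\<Sum>x\<in>UNIV. pXY Q x y)"
  by (simp add: pY_def pXY_def)

lemma pX_eq_sum_pXZ: "pX Q x = (\<Sum>z\<in>UNIV. pXZ Q x z)"
  unfolding pX_def pXZ_def by (rule sum.swap)

lemma pZ_eq_sum_pXZ: "pZ Q z = (\<Sum>x\<in>UNIV. pXZ Q x z)"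
  by (simp add: pZ_def pXZ_def)

lemma pZ_eq_sum_pYZ: "pZ Q z = (\<Sum>y\<in>UNIV. pYZ Q y z)"
  unfolding pZ_def pYZ_def by (rule sum.swap)

lemma sum_pZ:
  assumes "distr Q"
  shows "(\<Sum>z\<in>UNIV. pZ Q z) = 1"
proof -
  have "(\<Sum>z\<in>UNIV. pZ Q z) = (\<Sum>x\<in>UNIV. \<Sum>z\<in>UNIV. \<Sum>y\<in>UNIV. Q x y z)"
    unfolding pZ_def by (rule sum.swap)
  also have "\<dots> = (\<Sum>x\<in>UNIV. \<Sum>y\<in>UNIV. \<Sum>z\<in>UNIV. Q x y z)"
    by (intro sum.cong refl sum.swap)
  finally show ?thesis using assms by (simp add: distr_def)
qed

lemma distr_nonneg: "distr Q \<Longrightarrow> 0 \<le> Q x y z"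
  by (simp add: distr_def)

lemma marginals_nonneg:
  assumes "distr Q"
  shows "0 \<le> pXY Q x y" "0 \<le> pXZ Q x z" "0 \<le> pYZ Q y z"
    and "0 \<le> pX Q x" "0 \<le> pY Q y" "0 \<le> pZ Q z"
  using distr_nonneg[OF assms]
  by (auto simp: pXY_def pXZ_def pYZ_def pX_def pY_def pZ_def intro!: sum_nonneg)

lemma marginals_pos:
  assumes d: "distr Q" and q: "0 < Q x y z"
  shows "0 < pXY Q x y" "0 < pXZ Q x z" "0 < pYZ Q y z"
    and "0 < pX Q x" "0 < pY Q y" "0 < pZ Q z"
proof -
  note nn = distr_nonneg[OF d] marginals_nonneg[OF d]
  have "Q x y z \<le> pXY Q x y" unfolding pXY_def by (rule member_le_sum) (auto simp: nn)
  moreover have "Q x y z \<le> pXZ Q x z" unfolding pXZ_def by (rule member_le_sum) (auto simp: nn)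
  moreover have "Q x y z \<le> pYZ Q y z" unfolding pYZ_def by (rule member_le_sum) (auto simp: nn)
  moreover have "pXY Q x y \<le> pX Q x" unfolding pX_eq_sum_pXY by (rule member_le_sum) (auto simp: nn)
  moreover have "pXY Q x y \<le> pY Q y" unfolding pY_eq_sum_pXY by (rule member_le_sum) (auto simp: nn)
  moreover have "pXZ Q x z \<le> pZ Q z" unfolding pZ_eq_sum_pXZ by (rule member_le_sum) (auto simp: nn)
  ultimately show "0 < pXY Q x y" "0 < pXZ Q x z" "0 < pYZ Q y z"
    and "0 < pX Q x" "0 < pY Q y" "0 < pZ Q z"
    using q by linarith+
qed

lemma MI_XY_cong: "pXY Q = pXY Q' \<Longrightarrow> MI_XY Q = MI_XY Q'"
  unfolding MI_XY_def pX_eq_sum_pXY pY_eq_sum_pXY by simp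

lemma MI_XZ_cong: "pXZ Q = pXZ Q' \<Longrightarrow> MI_XZ Q = MI_XZ Q'"
  unfolding MI_XZ_def pX_eq_sum_pXZ pZ_eq_sum_pXZ by simp

lemma MI_XY_eq_MI_XZ:
  fixes Q :: "'x::finite \<Rightarrow> 'y::finite \<Rightarrow> 'y \<Rightarrow> real"
  shows "pXY Q = pXZ Q \<Longrightarrow> MI_XY Q = MI_XZ Q"
  unfolding MI_XY_def MI_XZ_def pX_eq_sum_pXY pY_eq_sum_pXY pZ_eq_sum_pXZ by simp

lemma MI_X_YZ_chain_Z:
  assumes d: "distr Q"
  shows "MI_X_YZ Q = MI_XZ Q + CMI_XY_Z Q"
proof -
  have split: "plog (Q x y z) (pX Q x * pYZ Q y z) =
      Q x y z * log 2 (pXZ Q x z / (pX Q x * pZ Q z))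
    + plog (Q x y z) (pXZ Q x z * pYZ Q y z / pZ Q z)" for x y z
  proof (cases "Q x y z = 0")
    case False
    then have "0 < Q x y z" using distr_nonneg[OF d] by (simp add: order_less_le)
    with marginals_pos[OF d this] show ?thesis by (intro plog_split) (auto simp: field_simps)
  qed (simp add: plog_def)
  have "(\<Sum>x\<in>UNIV. \<Sum>y\<in>UNIV. \<Sum>z\<in>UNIV. Q x y z * log 2 (pXZ Q x z / (pX Q x * pZ Q z)))
      = (\<Sum>x\<in>UNIV. \<Sum>z\<in>UNIV. \<Sum>y\<in>UNIV. Q x y z * log 2 (pXZ Q x z / (pX Q x * pZ Q z)))"
    by (intro sum.cong refl sum.swap)
  also have "\<dots> = (\<Sum>x\<in>UNIV. \<Sum>z\<in>UNIV. pXZ Q x z * log 2 (pXZ Q x z / (pX Q x * pZ Q z)))"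
    by (simp add: pXZ_def sum_distrib_right)
  also have "\<dots> = MI_XZ Q"
    unfolding MI_XZ_def by (intro sum.cong refl) (simp add: plog_def)
  finally show ?thesis
    unfolding MI_X_YZ_def CMI_XY_Z_def split by (simp add: sum.distrib)
qed

lemma MI_X_YZ_chain_Y:
  assumes d: "distr Q"
  shows "MI_X_YZ Q = MI_XY Q + CMI_XZ_Y Q"
proof -
  have split: "plog (Q x y z) (pX Q x * pYZ Q y z) =
      Q x y z * log 2 (pXY Q x y / (pX Q x * pY Q y))
    + plog (Q x y z) (pXY Q x y * pYZ Q y z / pY Q y)" for x y z
  proof (cases "Q x y z = 0")
    case False
    then have "0 < Q x y z" using distr_nonneg[OF d] by (simp add: order_less_le)
    with marginals_pos[OF d this] show ?thesis by (intro plog_split) (auto simp: field_simps)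
  qed (simp add: plog_def)
  have "(\<Sum>x\<in>UNIV. \<Sum>y\<in>UNIV. \<Sum>z\<in>UNIV. Q x y z * log 2 (pXY Q x y / (pX Q x * pY Q y)))
      = (\<Sum>x\<in>UNIV. \<Sum>y\<in>UNIV. pXY Q x y * log 2 (pXY Q x y / (pX Q x * pY Q y)))"
    by (simp add: pXY_def sum_distrib_right)
  also have "\<dots> = MI_XY Q"
    unfolding MI_XY_def by (intro sum.cong refl) (simp add: plog_def)
  finally show ?thesis
    unfolding MI_X_YZ_def CMI_XZ_Y_def split by (simp add: sum.distrib)
qed

text \<open>Gibbs' inequality against the weights \<open>p(x,z) p(y,z) / p(z)\<close>, which also sum to \<open>1\<close>.\<close>
lemma CMI_XY_Z_nonneg:
  assumes d: "distr Q"
  shows "0 \<le> CMI_XY_Z Q"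
proof -
  define B where "B x y z = pXZ Q x z * pYZ Q y z / pZ Q z" for x y z
  have B_sum: "(\<Sum>x\<in>UNIV. \<Sum>y\<in>UNIV. B x y z) = pZ Q z" for z
  proof -
    have "(\<Sum>x\<in>UNIV. \<Sum>y\<in>UNIV. B x y z)
        = (\<Sum>x\<in>UNIV. pXZ Q x z) * (\<Sum>y\<in>UNIV. pYZ Q y z) / pZ Q z"
      unfolding B_def by (simp only: sum_product sum_divide_distrib)
    then show ?thesis
      unfolding pZ_eq_sum_pXZ[symmetric] pZ_eq_sum_pYZ[symmetric] by (cases "pZ Q z = 0") simp_all
  qed
  have "(\<Sum>x\<in>UNIV. \<Sum>y\<in>UNIV. \<Sum>z\<in>UNIV. B x y z) = (\<Sum>z\<in>UNIV. \<Sum>x\<in>UNIV. \<Sum>y\<in>UNIV. B x y z)"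
    by (subst sum.swap) (intro sum.cong refl sum.swap)
  also have "\<dots> = 1" using sum_pZ[OF d] by (simp add: B_sum)
  finally have B_total: "(\<Sum>x\<in>UNIV. \<Sum>y\<in>UNIV. \<Sum>z\<in>UNIV. B x y z) = 1" .
  have "0 = ((\<Sum>x\<in>UNIV. \<Sum>y\<in>UNIV. \<Sum>z\<in>UNIV. Q x y z)
      - (\<Sum>x\<in>UNIV. \<Sum>y\<in>UNIV. \<Sum>z\<in>UNIV. B x y z)) / ln 2"
    using d B_total by (simp add: distr_def)
  also have "\<dots> = (\<Sum>x\<in>UNIV. \<Sum>y\<in>UNIV. \<Sum>z\<in>UNIV. (Q x y z - B x y z) / ln 2)"
    by (simp only: diff_divide_distrib sum_divide_distrib sum_subtractf)
  also have "\<dots> \<le> CMI_XY_Z Q"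
    unfolding CMI_XY_Z_def B_def
    by (intro sum_mono plog_lower_bound)
       (auto simp: distr_nonneg[OF d] marginals_nonneg[OF d] marginals_pos[OF d])
  finally show ?thesis .
qed

lemma DeltaP_self: "distr P \<Longrightarrow> P \<in> DeltaP P"
  by (simp add: DeltaP_def)

lemma distr_if_DeltaP: "Q \<in> DeltaP P \<Longrightarrow> distr Q"
  by (simp add: DeltaP_def)

lemma MI_XY_on_DeltaP: "Q \<in> DeltaP P \<Longrightarrow> MI_XY Q = MI_XY P"
  by (intro MI_XY_cong) (simp add: DeltaP_def)

lemma MI_XZ_on_DeltaP: "Q \<in> DeltaP P \<Longrightarrow> MI_XZ Q = MI_XZ P"
  by (intro MI_XZ_cong) (simp add: DeltaP_def)

lemma CMI_XY_Z_minus_CMI_XZ_Y_on_DeltaP: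
  assumes "Q \<in> DeltaP P"
  shows "CMI_XY_Z Q - CMI_XZ_Y Q = MI_XY P - MI_XZ P"
proof -
  have "MI_XZ Q + CMI_XY_Z Q = MI_XY Q + CMI_XZ_Y Q"
    using MI_X_YZ_chain_Z MI_X_YZ_chain_Y distr_if_DeltaP[OF assms] by metis
  then show ?thesis using MI_XY_on_DeltaP[OF assms] MI_XZ_on_DeltaP[OF assms] by simp
qed

lemma cINF_attained:
  fixes f :: "'a \<Rightarrow> 'b::conditionally_complete_lattice"
  assumes "a \<in> A" "\<And>x. x \<in> A \<Longrightarrow> f a \<le> f x"
  shows "(INF x\<in>A. f x) = f a"
  using assms by (intro cInf_eq_minimum) auto

lemma cSUP_attained:
  fixes f :: "'a \<Rightarrow> 'b::conditionally_complete_lattice"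
  assumes "a \<in> A" "\<And>x. x \<in> A \<Longrightarrow> f x \<le> f a"
  shows "(SUP x\<in>A. f x) = f a"
  using assms by (intro cSup_eq_maximum) auto

context
  fixes P :: "'x::finite \<Rightarrow> 'y::finite \<Rightarrow> 'z::finite \<Rightarrow> real" and Q\<^sub>0
  assumes Q0_DeltaP: "Q\<^sub>0 \<in> DeltaP P" and Q0_cond_indep: "CMI_XY_Z Q\<^sub>0 = 0"
begin

lemma UI_Y_eq_0_if_cond_indep_coupling: "UI_Y P = 0"
proof -
  have "UI_Y P = CMI_XY_Z Q\<^sub>0"
    unfolding UI_Y_def
    using Q0_cond_indep CMI_XY_Z_nonneg[OF distr_if_DeltaP]
    by (intro cINF_attained[OF Q0_DeltaP]) simp
  then show ?thesis using Q0_cond_indep by simp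
qed

lemma SI_eq_MI_XY_if_cond_indep_coupling: "SI P = MI_XY P"
proof -
  have CoI_on_DeltaP: "CoI Q = MI_XY P - CMI_XY_Z Q" if "Q \<in> DeltaP P" for Q
    using MI_XY_on_DeltaP[OF that] by (simp add: CoI_def)
  have "SI P = CoI Q\<^sub>0"
    unfolding SI_def
  proof (rule cSUP_attained[OF Q0_DeltaP])
    fix Q assume Q: "Q \<in> DeltaP P"
    show "CoI Q \<le> CoI Q\<^sub>0"
      using CoI_on_DeltaP[OF Q] CoI_on_DeltaP[OF Q0_DeltaP] Q0_cond_indep
        CMI_XY_Z_nonneg[OF distr_if_DeltaP[OF Q]] by simp
  qed
  then show ?thesis using CoI_on_DeltaP[OF Q0_DeltaP] Q0_cond_indep by simp
qed

lemma CI_eq_CMI_XY_Z_if_cond_indep_coupling: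
  assumes "distr P"
  shows "CI P = CMI_XY_Z P"
proof -
  have MI_X_YZ_on_DeltaP: "MI_X_YZ Q = MI_XZ P + CMI_XY_Z Q" if "Q \<in> DeltaP P" for Q
    using MI_X_YZ_chain_Z[OF distr_if_DeltaP[OF that]] MI_XZ_on_DeltaP[OF that] by simp
  have "(INF Q\<in>DeltaP P. MI_X_YZ Q) = MI_X_YZ Q\<^sub>0"
  proof (rule cINF_attained[OF Q0_DeltaP])
    fix Q assume Q: "Q \<in> DeltaP P"
    show "MI_X_YZ Q\<^sub>0 \<le> MI_X_YZ Q"
      using MI_X_YZ_on_DeltaP[OF Q] MI_X_YZ_on_DeltaP[OF Q0_DeltaP] Q0_cond_indep
        CMI_XY_Z_nonneg[OF distr_if_DeltaP[OF Q]] by simp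
  qed
  also have "\<dots> = MI_XZ P" using MI_X_YZ_on_DeltaP[OF Q0_DeltaP] Q0_cond_indep by simp
  finally show ?thesis unfolding CI_def using MI_X_YZ_chain_Z[OF assms] by simp
qed

end

lemma UI_Z_eq_UI_Y:
  assumes "MI_XY P = MI_XZ P"
  shows "UI_Z P = UI_Y P"
proof -
  have "CMI_XZ_Y Q = CMI_XY_Z Q" if "Q \<in> DeltaP P" for Q
    using CMI_XY_Z_minus_CMI_XZ_Y_on_DeltaP[OF that] assms by linarith
  then have "CMI_XZ_Y ` DeltaP P = CMI_XY_Z ` DeltaP P" by simp
  then show ?thesis unfolding UI_Z_def UI_Y_def by simp
qed

definition diag_coupling :: "('x::finite \<Rightarrow> 'y::finite \<Rightarrow> 'y \<Rightarrow> real) \<Rightarrow> 'x \<Rightarrow> 'y \<Rightarrow> 'y \<Rightarrow> real"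
  where "diag_coupling P x y z = (if y = z then pXY P x y else 0)"

lemma pXY_diag_coupling: "pXY (diag_coupling P) = pXY P"
  by (intro ext) (simp add: pXY_def diag_coupling_def)

lemma pXZ_diag_coupling: "pXZ (diag_coupling P) = pXY P"
  by (intro ext) (simp add: pXZ_def diag_coupling_def)

lemma distr_diag_coupling:
  assumes "distr P"
  shows "distr (diag_coupling P)"
proof -
  have "(\<Sum>x\<in>UNIV. \<Sum>y\<in>UNIV. \<Sum>z\<in>UNIV. diag_coupling P x y z) = (\<Sum>x\<in>UNIV. \<Sum>y\<in>UNIV. pXY P x y)"
    by (simp add: pXY_diag_coupling flip: pXY_def)
  also have "\<dots> = 1" using assms by (simp add: distr_def pXY_def)
  finally show ?thesis
    using marginals_nonneg[OF assms] by (auto simp: distr_def diag_coupling_def)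
qed

text \<open>Given \<open>Z\<close>, the variable \<open>Y = Z\<close> is determined, so it carries no information on \<open>X\<close>.\<close>
lemma CMI_XY_Z_diag_coupling:
  assumes "distr P"
  shows "CMI_XY_Z (diag_coupling P) = 0"
  unfolding CMI_XY_Z_def
proof (intro sum.neutral ballI)
  fix x y z
  let ?Q = "diag_coupling P"
  show "plog (?Q x y z) (pXZ ?Q x z * pYZ ?Q y z / pZ ?Q z) = 0"
  proof (cases "y = z \<and> pXY P x y \<noteq> 0")
    case True
    have "pYZ ?Q y z = pY P y" "pZ ?Q z = pY P y"
      using True by (simp_all add: pYZ_def pZ_def pY_eq_sum_pXY diag_coupling_def)
    moreover have "0 < diag_coupling P x y y"
      using True marginals_nonneg(1)[OF assms, of x y] by (auto simp: diag_coupling_def order_less_le)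
    then have "0 < pY P y"
      using marginals_pos(5)[OF distr_diag_coupling[OF assms]]
      by (simp add: pY_eq_sum_pXY pXY_diag_coupling)
    ultimately show ?thesis
      using True by (simp add: plog_def diag_coupling_def pXZ_diag_coupling)
  qed (auto simp: plog_def diag_coupling_def)
qed

theorem mainTheorem5:
  fixes P :: "'x::finite \<Rightarrow> 'y::finite \<Rightarrow> 'y \<Rightarrow> real"
  assumes "distr P"
    and "\<forall>x w. pXY P x w = pXZ P x w"
  shows "UI_Y P = 0 \<and> UI_Z P = 0
    \<and> SI P = MI_XY P \<and> MI_XY P = MI_XZ P
    \<and> CI P = CMI_XY_Z P \<and> CMI_XY_Z P = CMI_XZ_Y P"
proof -
  have same_pairs: "pXY P = pXZ P" using assms(2) by auto
  have MI_eq: "MI_XY P = MI_XZ P" using same_pairs by (rule MI_XY_eq_MI_XZ)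
  have "diag_coupling P \<in> DeltaP P"
    using assms(1) same_pairs
    by (simp add: DeltaP_def distr_diag_coupling pXY_diag_coupling pXZ_diag_coupling)
  note coupling = this CMI_XY_Z_diag_coupling[OF assms(1)]
  have UI_Y: "UI_Y P = 0" by (rule UI_Y_eq_0_if_cond_indep_coupling[OF coupling])
  moreover have "UI_Z P = 0" using UI_Z_eq_UI_Y[OF MI_eq] UI_Y by simp
  moreover have "SI P = MI_XY P" by (rule SI_eq_MI_XY_if_cond_indep_coupling[OF coupling])
  moreover have "CI P = CMI_XY_Z P"
    by (rule CI_eq_CMI_XY_Z_if_cond_indep_coupling[OF coupling assms(1)])
  moreover have "CMI_XY_Z P = CMI_XZ_Y P"
    using CMI_XY_Z_minus_CMI_XZ_Y_on_DeltaP[OF DeltaP_self[OF assms(1)]] MI_eq by simp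
  ultimately show ?thesis using MI_eq by simp
qed

end
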